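(* Let $1<p<\infty$ and $0<R\le\infty$. Let $\nu$ be a radial weight function on $[0,R)$, and suppose there is some $R'$ with $0\le R'<R$ such that for each $y$ with $R'<y<R$, $\inf\{\nu(x):R'\le x<y\}>0$. Then $A^p_R(\nu(|z|))$ is a Banach space, convergence in the norm of $A^p_R(\nu(|z|))$ implies uniform convergence on compact subsets of $\mathbb{D}_R$, and the point evaluations on $A^p_R(\nu(|z|))$ are bounded uniformly on compact subsets of $\mathbb{D}_R$.
   Context: $\mathbb{D}_R=\{|z|<R\}$ ($\mathbb{D}_\infty=\mathbb{C}$), $dA$ is area measure. A radial weight function on $[0,R)$ is a nonnegative measurable function $\nu$ on $[0,R)$ such that $\nu(|z|)$ is integrable on $\mathbb{D}_R$ and $\nu$ is not $0$ almost everywhere. $A^p_R(\nu(|z|))$ is the space of analytic functions $f$ on $\mathbb{D}_R$ with $\|f\|=\left(\int_{\mathbb{D}_R}|f(z)|^p\nu(|z|)\,dA(z)\right)^{1/p}<\infty$. *)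

theory Defs
  imports "HOL-Analysis.Analysis"
begin

definition disc :: "ereal \<Rightarrow> complex set" where
  "disc R = {z. ereal (cmod z) < R}"

definition radial_weight :: "ereal \<Rightarrow> (real \<Rightarrow> real) \<Rightarrow> bool" where
  "radial_weight R \<nu> \<longleftrightarrow>
     (\<forall>x. 0 \<le> x \<and> ereal x < R \<longrightarrow> 0 \<le> \<nu> x) \<and>
     (\<lambda>x. indicator {x. 0 \<le> x \<and> ereal x < R} x * \<nu> x) \<in> borel_measurable lebesgue \<and>
     set_integrable lebesgue (disc R) (\<lambda>z. \<nu> (cmod z)) \<and>
     \<not> (AE x in lebesgue. (0 \<le> x \<and> ereal x < R) \<longrightarrow> \<nu> x = 0)"

definition Ap_integral :: "real \<Rightarrow> ereal \<Rightarrow> (real \<Rightarrow> real) \<Rightarrow> (complex \<Rightarrow> complex) \<Rightarrow> ennreal" where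
  "Ap_integral p R \<nu> f = (\<integral>\<^sup>+ z \<in> disc R. ennreal (cmod (f z) powr p * \<nu> (cmod z)) \<partial>lebesgue)"

definition Ap_space :: "real \<Rightarrow> ereal \<Rightarrow> (real \<Rightarrow> real) \<Rightarrow> (complex \<Rightarrow> complex) set" where
  "Ap_space p R \<nu> = {f. f holomorphic_on disc R \<and> Ap_integral p R \<nu> f < \<infinity>}"

definition Ap_norm :: "real \<Rightarrow> ereal \<Rightarrow> (real \<Rightarrow> real) \<Rightarrow> (complex \<Rightarrow> complex) \<Rightarrow> real" where
  "Ap_norm p R \<nu> f = enn2real (Ap_integral p R \<nu> f) powr (1 / p)"

end

theory Submission
  imports Defs "HOL-Complex_Analysis.Complex_Analysis"
begin

text \<open>
  Everything rests on a local estimate: by the mean value property over a small disc, \<open>|f(w)|\<close> is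
  bounded by the \<open>L\<^sup>p\<close> norm of \<open>f\<close> on that disc. Given a compact \<open>K\<close>, choose a circle \<open>|z| = \<rho>\<close>
  enclosing \<open>K\<close> such that \<open>\<nu>\<close> is bounded below by some \<open>c > 0\<close> on an annulus around it; there the
  local estimate bounds \<open>|f|\<close> by a multiple of \<open>\<parallel>f\<parallel>\<close>, and the maximum modulus principle carries
  the bound to \<open>K\<close>. Hence norm-Cauchy sequences are locally uniformly Cauchy, their pointwise
  limit is holomorphic by Weierstrass' theorem, and Fatou's lemma shows that it is the limit in norm.
\<close>

section \<open>Lebesgue measure on the complex plane\<close>

lemma borel_measurable_Complex [measurable]:
  assumes [measurable]: "f \<in> borel_measurable M" "g \<in> borel_measurable M"
  shows "(\<lambda>x. Complex (f x) (g x)) \<in> borel_measurable M"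
  unfolding Complex_eq by measurable

lemma distr_lborel_pair_Complex:
  "distr (lborel \<Otimes>\<^sub>M lborel) borel (\<lambda>(x, y). Complex x y) = (lborel :: complex measure)"
proof (rule lborel_eqI[symmetric])
  fix l u :: complex
  assume le: "\<And>b. b \<in> Basis \<Longrightarrow> l \<bullet> b \<le> u \<bullet> b"
  have "Re l \<le> Re u" "Im l \<le> Im u"
    using le[of 1] le[of \<i>] by (auto simp: Basis_complex_def)
  have box: "(\<lambda>(x, y). Complex x y) -` box l u = {Re l<..<Re u} \<times> {Im l<..<Im u}"
    by (auto simp: box_def Basis_complex_def)
  have "emeasure (distr (lborel \<Otimes>\<^sub>M lborel) borel (\<lambda>(x, y). Complex x y)) (box l u)
        = emeasure (lborel \<Otimes>\<^sub>M lborel) ({Re l<..<Re u} \<times> {Im l<..<Im u})"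
    by (subst emeasure_distr) (auto simp: box space_pair_measure)
  also have "\<dots> = ennreal (\<Prod>b\<in>Basis. (u - l) \<bullet> b)"
    using \<open>Re l \<le> Re u\<close> \<open>Im l \<le> Im u\<close>
    by (simp add: lborel.emeasure_pair_measure_Times ennreal_mult Basis_complex_def)
  finally show "emeasure (distr (lborel \<Otimes>\<^sub>M lborel) borel (\<lambda>(x, y). Complex x y)) (box l u)
      = ennreal (\<Prod>b\<in>Basis. (u - l) \<bullet> b)" .
qed simp

lemma nn_integral_complex_Re_Im:
  fixes g :: "complex \<Rightarrow> ennreal"
  assumes [measurable]: "g \<in> borel_measurable borel"
  shows "(\<integral>\<^sup>+z. g z \<partial>lborel) = (\<integral>\<^sup>+y. (\<integral>\<^sup>+x. g (Complex x y) \<partial>lborel) \<partial>lborel)"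
    and "(\<integral>\<^sup>+z. g z \<partial>lborel) = (\<integral>\<^sup>+x. (\<integral>\<^sup>+y. g (Complex x y) \<partial>lborel) \<partial>lborel)"
proof -
  have [measurable]: "(\<lambda>(x, y). Complex x y) \<in> borel_measurable (lborel \<Otimes>\<^sub>M lborel)"
    by (simp add: case_prod_beta')
  have *: "(\<integral>\<^sup>+z. g z \<partial>lborel) = (\<integral>\<^sup>+xy. g (case xy of (x, y) \<Rightarrow> Complex x y) \<partial>(lborel \<Otimes>\<^sub>M lborel))"
    by (subst distr_lborel_pair_Complex[symmetric], subst nn_integral_distr) auto
  show "(\<integral>\<^sup>+z. g z \<partial>lborel) = (\<integral>\<^sup>+y. (\<integral>\<^sup>+x. g (Complex x y) \<partial>lborel) \<partial>lborel)"
    unfolding * by (subst lborel_pair.nn_integral_snd[symmetric]) auto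
  show "(\<integral>\<^sup>+z. g z \<partial>lborel) = (\<integral>\<^sup>+x. (\<integral>\<^sup>+y. g (Complex x y) \<partial>lborel) \<partial>lborel)"
    unfolding * by (subst lborel.nn_integral_fst[symmetric]) auto
qed

definition shear_Re :: "real \<Rightarrow> complex \<Rightarrow> complex" where
  "shear_Re t z = Complex (Re z + t * Im z) (Im z)"

definition shear_Im :: "real \<Rightarrow> complex \<Rightarrow> complex" where
  "shear_Im t z = Complex (Re z) (Im z + t * Re z)"

lemma shear_measurable [measurable]:
  "shear_Re t \<in> borel_measurable borel" "shear_Im t \<in> borel_measurable borel"
  unfolding shear_Re_def shear_Im_def by (measurable, measurable)

lemma nn_integral_shear:
  fixes g :: "complex \<Rightarrow> ennreal"
  assumes [measurable]: "g \<in> borel_measurable borel"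
  shows "(\<integral>\<^sup>+z. g (shear_Re t z) \<partial>lborel) = (\<integral>\<^sup>+z. g z \<partial>lborel)"
    and "(\<integral>\<^sup>+z. g (shear_Im t z) \<partial>lborel) = (\<integral>\<^sup>+z. g z \<partial>lborel)"
proof -
  have "(\<integral>\<^sup>+z. g (shear_Re t z) \<partial>lborel) = (\<integral>\<^sup>+y. (\<integral>\<^sup>+x. g (Complex (x + t * y) y) \<partial>lborel) \<partial>lborel)"
    by (subst nn_integral_complex_Re_Im(1)) (simp_all add: shear_Re_def)
  also have "\<dots> = (\<integral>\<^sup>+y. (\<integral>\<^sup>+x. g (Complex x y) \<partial>lborel) \<partial>lborel)"
    using nn_integral_real_affine[of "\<lambda>x. g (Complex x y)" 1 "t * y" for y]
    by (simp add: add.commute)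
  also have "\<dots> = (\<integral>\<^sup>+z. g z \<partial>lborel)"
    by (rule nn_integral_complex_Re_Im(1)[symmetric]) simp
  finally show "(\<integral>\<^sup>+z. g (shear_Re t z) \<partial>lborel) = (\<integral>\<^sup>+z. g z \<partial>lborel)" .
  have "(\<integral>\<^sup>+z. g (shear_Im t z) \<partial>lborel) = (\<integral>\<^sup>+x. (\<integral>\<^sup>+y. g (Complex x (y + t * x)) \<partial>lborel) \<partial>lborel)"
    by (subst nn_integral_complex_Re_Im(2)) (simp_all add: shear_Im_def)
  also have "\<dots> = (\<integral>\<^sup>+x. (\<integral>\<^sup>+y. g (Complex x y) \<partial>lborel) \<partial>lborel)"
    using nn_integral_real_affine[of "\<lambda>y. g (Complex x y)" 1 "t * x" for x]
    by (simp add: add.commute)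
  also have "\<dots> = (\<integral>\<^sup>+z. g z \<partial>lborel)"
    by (rule nn_integral_complex_Re_Im(2)[symmetric]) simp
  finally show "(\<integral>\<^sup>+z. g (shear_Im t z) \<partial>lborel) = (\<integral>\<^sup>+z. g z \<partial>lborel)" .
qed

text \<open>A rotation by \<open>a = c + i s \<noteq> -1\<close> is the product of three shears, the outer two with
  parameter \<open>-s / (1 + c)\<close> and the middle one with parameter \<open>s\<close>.\<close>

lemma rotation_eq_shears:
  assumes "cmod a = 1" "a \<noteq> -1"
  defines "t \<equiv> - (Im a / (1 + Re a))"
  shows "a * z = shear_Re t (shear_Im (Im a) (shear_Re t z))"
proof -
  have unit: "Re a ^ 2 + Im a ^ 2 = 1"
    using assms(1) by (metis cmod_power2 one_power2)
  have "1 + Re a \<noteq> 0"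
  proof
    assume "1 + Re a = 0"
    then have "Re a = -1" by simp
    moreover from this have "Im a = 0"
      using unit by (simp add: power2_eq_square)
    ultimately show False
      using assms(2) by (simp add: complex_eq_iff)
  qed
  then have st: "Im a * t = Re a - 1" and tc: "t * (1 + Re a) = - Im a"
    using unit by (auto simp: t_def field_simps power2_eq_square)
  have "Re z + t * Im z + t * (Im z + Im a * (Re z + t * Im z))
        = (1 + Im a * t) * Re z + (t * (1 + Re a)) * Im z + t * (1 - Re a + Im a * t) * Im z"
    by (simp add: algebra_simps)
  also have "\<dots> = Re a * Re z - Im a * Im z"
    by (simp add: st tc)
  finally have re: "Re z + t * Im z + t * (Im z + Im a * (Re z + t * Im z)) = Re a * Re z - Im a * Im z" .
  have "Im z + Im a * (Re z + t * Im z) = Im a * Re z + (1 + Im a * t) * Im z"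
    by (simp add: algebra_simps)
  then have im: "Im z + Im a * (Re z + t * Im z) = Im a * Re z + Re a * Im z"
    by (simp add: st)
  have "a * z = Complex (Re a * Re z - Im a * Im z) (Im a * Re z + Re a * Im z)"
    by (simp add: complex_eq_iff)
  also have "\<dots> = shear_Re t (shear_Im (Im a) (shear_Re t z))"
    unfolding shear_Re_def shear_Im_def by (simp only: complex.sel im re[unfolded im])
  finally show ?thesis .
qed

lemma nn_integral_mult_unit:
  fixes g :: "complex \<Rightarrow> ennreal"
  assumes [measurable]: "g \<in> borel_measurable borel" and "cmod a = 1"
  shows "(\<integral>\<^sup>+z. g (a * z) \<partial>lborel) = (\<integral>\<^sup>+z. g z \<partial>lborel)"
proof -
  have rotate: "(\<integral>\<^sup>+z. f (b * z) \<partial>lborel) = (\<integral>\<^sup>+z. f z \<partial>lborel)"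
    if [measurable]: "f \<in> borel_measurable borel" and b: "cmod b = 1" "b \<noteq> -1" for f b
  proof -
    define t where "t = - (Im b / (1 + Re b))"
    have "(\<integral>\<^sup>+z. f (b * z) \<partial>lborel) = (\<integral>\<^sup>+z. f (shear_Re t (shear_Im (Im b) (shear_Re t z))) \<partial>lborel)"
      using rotation_eq_shears[OF b] by (simp add: t_def)
    also have "\<dots> = (\<integral>\<^sup>+z. f (shear_Re t (shear_Im (Im b) z)) \<partial>lborel)"
      by (rule nn_integral_shear(1)) measurable
    also have "\<dots> = (\<integral>\<^sup>+z. f (shear_Re t z) \<partial>lborel)"
      by (rule nn_integral_shear(2)) measurable
    also have "\<dots> = (\<integral>\<^sup>+z. f z \<partial>lborel)"
      by (rule nn_integral_shear(1)) measurable
    finally show ?thesis .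
  qed
  show ?thesis
  proof (cases "a = -1")
    case True
    have "(\<integral>\<^sup>+z. g (a * z) \<partial>lborel) = (\<integral>\<^sup>+z. (\<lambda>w. g (\<i> * w)) (\<i> * z) \<partial>lborel)"
      using True by simp
    also have "\<dots> = (\<integral>\<^sup>+w. g (\<i> * w) \<partial>lborel)"
      by (rule rotate) (auto simp: complex_eq_iff)
    also have "\<dots> = (\<integral>\<^sup>+z. g z \<partial>lborel)"
      by (rule rotate) (auto simp: complex_eq_iff)
    finally show ?thesis .
  qed (use assms rotate in auto)
qed

lemma distr_lborel_mult_unit:
  assumes "cmod a = 1"
  shows "distr lborel borel ((*) a) = (lborel :: complex measure)"
proof (rule measure_eqI)
  fix A :: "complex set"
  assume "A \<in> sets (distr lborel borel ((*) a))"
  then have [measurable]: "A \<in> sets borel" by simp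
  have "emeasure (distr lborel borel ((*) a)) A = emeasure lborel ((*) a -` A)"
    by (simp add: emeasure_distr)
  also have "\<dots> = (\<integral>\<^sup>+z. indicator ((*) a -` A) z \<partial>lborel)"
    using measurable_sets[of "(*) a" borel borel A] by (simp add: nn_integral_indicator)
  also have "\<dots> = (\<integral>\<^sup>+z. indicator A (a * z) \<partial>lborel)"
    by (simp add: indicator_vimage)
  also have "\<dots> = emeasure lborel A"
    using nn_integral_mult_unit[OF _ assms, of "indicator A"] by simp
  finally show "emeasure (distr lborel borel ((*) a)) A = emeasure lborel A" .
qed simp

section \<open>The mean value property over discs\<close>

lemma integral_cball_power:
  assumes "n \<ge> 1"
  shows "(\<integral>z. indicator (cball 0 d) z *\<^sub>R z ^ n \<partial>lborel) = (0 :: complex)"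
proof -
  define a where "a = cis (pi / n)"
  have "real n * (pi / real n) = pi"
    using assms by simp
  then have a: "cmod a = 1" "a ^ n = -1"
    unfolding a_def Complex.DeMoivre by simp_all
  define I where "I = (\<integral>z. indicator (cball 0 d) z *\<^sub>R z ^ n \<partial>lborel :: complex)"
  have "I = (\<integral>z. indicator (cball 0 d) z *\<^sub>R z ^ n \<partial>distr lborel borel ((*) a))"
    by (simp add: distr_lborel_mult_unit[OF a(1)] I_def)
  also have "\<dots> = (\<integral>z. indicator (cball 0 d) (a * z) *\<^sub>R (a * z) ^ n \<partial>lborel)"
    by (rule integral_distr) (auto intro!: borel_measurable_continuous_on_indicator continuous_intros)
  also have "\<dots> = (\<integral>z. a ^ n * (indicator (cball 0 d) z *\<^sub>R z ^ n) \<partial>lborel)"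
    using a(1) by (intro Bochner_Integration.integral_cong) (auto simp: indicator_def norm_mult power_mult_distrib)
  also have "\<dots> = - I"
    unfolding I_def a(2) by simp
  finally show ?thesis
    unfolding I_def[symmetric] by simp
qed

lemma integral_cball_power_series:
  fixes c :: "nat \<Rightarrow> complex"
  assumes "0 \<le> d"
    and sums: "\<And>z. z \<in> cball 0 d \<Longrightarrow> (\<lambda>n. c n * z ^ n) sums h z"
    and summable: "summable (\<lambda>n. cmod (c n) * d ^ n)"
  shows "(\<integral>z. indicator (cball 0 d) z *\<^sub>R h z \<partial>lborel) = measure lebesgue (cball (0::complex) d) *\<^sub>R c 0"
proof -
  define m where "m = measure lebesgue (cball (0::complex) d)"
  define f where "f n z = indicator (cball 0 d) z *\<^sub>R (c n * z ^ n)" for n z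
  have integrable: "integrable lborel (f n)" for n
    unfolding f_def by (rule borel_integrable_compact) (auto intro!: continuous_intros)
  have bound: "norm (f n z) \<le> indicator (cball 0 d) z * (cmod (c n) * d ^ n)" for n z
    by (auto simp: f_def indicator_def norm_mult norm_power intro!: mult_left_mono power_mono)
  have norm_integral: "(\<integral>z. norm (f n z) \<partial>lborel) \<le> m * (cmod (c n) * d ^ n)" for n
  proof -
    have "(\<integral>z. norm (f n z) \<partial>lborel) \<le> (\<integral>z. indicator (cball (0::complex) d) z * (cmod (c n) * d ^ n) \<partial>lborel)"
    proof (rule Bochner_Integration.integral_mono)
      show "norm (f n z) \<le> indicator (cball 0 d) z * (cmod (c n) * d ^ n)" for z
        by (rule bound)
      show "integrable lborel (\<lambda>z. norm (f n z))"
        using integrable by simp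
      show "integrable lborel (\<lambda>z. indicator (cball (0::complex) d) z * (cmod (c n) * d ^ n))"
        using borel_integrable_compact[of "cball (0::complex) d" "\<lambda>_. cmod (c n) * d ^ n"] by simp
    qed
    then show ?thesis
      by (simp add: m_def)
  qed
  have "(\<integral>z. indicator (cball 0 d) z *\<^sub>R h z \<partial>lborel) = (\<integral>z. (\<Sum>n. f n z) \<partial>lborel)"
    using sums by (intro Bochner_Integration.integral_cong) (auto simp: f_def sums_iff indicator_def)
  also have "\<dots> = (\<Sum>n. integral\<^sup>L lborel (f n))"
  proof (rule integral_suminf[OF integrable])
    have "summable (\<lambda>n. norm (f n z))" for z
    proof (rule summable_comparison_test'[OF summable])
      show "norm (norm (f n z)) \<le> cmod (c n) * d ^ n" for n
        using bound[of n z] \<open>0 \<le> d\<close>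
        by (cases "z \<in> cball 0 d") (auto simp: indicator_def intro: order_trans)
    qed
    then show "AE z in lborel. summable (\<lambda>n. norm (f n z))"
      by simp
    show "summable (\<lambda>n. \<integral>z. norm (f n z) \<partial>lborel)"
    proof (rule summable_comparison_test'[OF summable_mult[OF summable, of m]])
      show "norm (\<integral>z. norm (f n z) \<partial>lborel) \<le> m * (cmod (c n) * d ^ n)" for n
        using norm_integral[of n] by simp
    qed
  qed
  also have "(\<lambda>n. integral\<^sup>L lborel (f n)) = (\<lambda>n. if n = 0 then m *\<^sub>R c 0 else 0)"
  proof
    fix n
    have "f n = (\<lambda>z. c n * (indicator (cball 0 d) z *\<^sub>R z ^ n))"
      by (auto simp: f_def fun_eq_iff indicator_def)
    then have "integral\<^sup>L lborel (f n) = c n * (\<integral>z. indicator (cball 0 d) z *\<^sub>R z ^ n \<partial>lborel)"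
      by (simp only: integral_mult_right_zero)
    also have "\<dots> = (if n = 0 then m *\<^sub>R c 0 else 0)"
      by (cases "n = 0") (simp add: m_def scaleR_conv_of_real, simp add: integral_cball_power)
    finally show "integral\<^sup>L lborel (f n) = (if n = 0 then m *\<^sub>R c 0 else 0)" .
  qed
  also have "(\<Sum>n. if n = 0 then m *\<^sub>R c 0 else 0) = m *\<^sub>R c 0"
    by (rule sums_unique[symmetric]) (rule sums_single)
  finally show ?thesis
    by (simp add: m_def)
qed

lemma integral_cball_holomorphic:
  fixes h :: "complex \<Rightarrow> complex"
  assumes h: "h holomorphic_on ball 0 r" and d: "0 < d" "d < r"
  shows "(\<integral>z. indicator (cball 0 d) z *\<^sub>R h z \<partial>lborel) = measure lebesgue (cball (0::complex) d) *\<^sub>R h 0"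
proof -
  define r' where "r' = (d + r) / 2"
  have r': "d < r'" "r' < r"
    using d by (auto simp: r'_def)
  have "continuous_on (cball 0 r') h"
    using continuous_on_subset[OF holomorphic_on_imp_continuous_on[OF h], of "cball 0 r'"] r'
    by (simp add: cball_subset_ball_iff)
  then have "bounded (h ` cball 0 r')"
    by (rule compact_imp_bounded[OF compact_continuous_image[OF _ compact_cball]])
  then obtain B where "\<forall>w \<in> h ` cball 0 r'. cmod w \<le> B"
    by (auto simp: bounded_iff)
  then have B: "\<And>z. z \<in> cball 0 r' \<Longrightarrow> cmod (h z) \<le> B"
    by blast
  define c where "c n = (deriv ^^ n) h 0 / fact n" for n
  have coeff: "cmod (c n) \<le> B / r' ^ n" for n
  proof -
    have "norm ((deriv ^^ n) h 0) \<le> fact n * B / r' ^ n"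
      by (rule Cauchy_inequality) (use h r' d B \<open>continuous_on (cball 0 r') h\<close> in
          \<open>auto intro: holomorphic_on_subset simp: dist_norm\<close>)
    then show ?thesis
      by (simp add: c_def norm_divide field_simps)
  qed
  have "summable (\<lambda>n. B * (d / r') ^ n)"
    using d r' by (intro summable_mult summable_geometric) auto
  then have "summable (\<lambda>n. cmod (c n) * d ^ n)"
  proof (rule summable_comparison_test')
    fix n
    have "cmod (c n) * d ^ n \<le> B / r' ^ n * d ^ n"
      using coeff d by (intro mult_right_mono) auto
    then show "norm (cmod (c n) * d ^ n) \<le> B * (d / r') ^ n"
      using d by (simp add: power_divide)
  qed
  moreover have "(\<lambda>n. c n * z ^ n) sums h z" if "z \<in> cball 0 d" for z
    using holomorphic_power_series[OF h] that d by (simp add: c_def)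
  ultimately show ?thesis
    using integral_cball_power_series[of d c h] d by (simp add: c_def)
qed

section \<open>A local estimate for holomorphic functions\<close>

lemma le_add_powr:
  fixes t s p :: real
  assumes "0 \<le> t" "0 < s" "1 < p"
  shows "t \<le> s + s powr (1 - p) * t powr p"
proof (cases "t \<le> s")
  case True
  then show ?thesis
    by (simp add: add_increasing2)
next
  case False
  then have "1 \<le> t / s"
    using assms by simp
  have "t = t * 1"
    by simp
  also have "\<dots> \<le> t * (t / s) powr (p - 1)"
    using \<open>1 \<le> t / s\<close> assms by (intro mult_left_mono ge_one_powr_ge_zero) auto
  also have "\<dots> = t * t powr (p - 1) / s powr (p - 1)"
    using assms by (simp add: powr_divide)
  also have "t * t powr (p - 1) = t powr p"
    using False assms by (simp add: powr_mult_base)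
  also have "t powr p / s powr (p - 1) = s powr (1 - p) * t powr p"
    using powr_minus[of s "p - 1"] by (simp add: divide_inverse mult.commute)
  finally show ?thesis
    using assms by linarith
qed

text \<open>Optimising the bound over \<open>s\<close>: the choice \<open>s = J powr (1/p)\<close> balances both terms.\<close>

lemma le_of_forall_le_add_powr:
  fixes x m J p :: real
  assumes "0 < m" "0 \<le> J" "1 < p"
    and le: "\<And>s. 0 < s \<Longrightarrow> m * x \<le> s * m + s powr (1 - p) * J"
  shows "x \<le> (1 + 1 / m) * J powr (1 / p)"
proof (cases "J = 0")
  case True
  have "x \<le> e" if "0 < e" for e
    using le[OF that] True \<open>0 < m\<close> by (simp add: mult.commute)
  then show ?thesis
    using True by (simp add: field_le_epsilon[of x 0, simplified])
next
  case False
  define s where "s = J powr (1 / p)"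
  have "0 < s"
    using False assms by (simp add: s_def)
  have "s powr (1 - p) * J = J powr ((1 - p) / p + 1)"
    using False assms by (simp add: s_def powr_powr powr_add)
  also have "(1 - p) / p + 1 = 1 / p"
    using assms by (simp add: field_simps)
  finally have "s powr (1 - p) * J = s"
    by (simp add: s_def)
  then have "m * x \<le> s * m + s"
    using le[OF \<open>0 < s\<close>] by simp
  also have "s * m + s = m * ((1 + 1 / m) * s)"
    using \<open>0 < m\<close> by (simp add: field_simps)
  finally show ?thesis
    using \<open>0 < m\<close> by (simp add: s_def)
qed

lemma nn_integral_lborel_translate:
  fixes g :: "'a::euclidean_space \<Rightarrow> ennreal"
  assumes [measurable]: "g \<in> borel_measurable borel"
  shows "(\<integral>\<^sup>+z. g (w + z) \<partial>lborel) = (\<integral>\<^sup>+z. g z \<partial>lborel)"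
  by (subst (2) lborel_distr_plus[of w, symmetric], subst nn_integral_distr) simp_all

lemma borel_measurable_indicator_powr:
  fixes f :: "'a::topological_space \<Rightarrow> 'b::real_normed_vector"
  assumes "S \<in> sets borel" "continuous_on S f" "0 < p"
  shows "(\<lambda>z. indicator S z * norm (f z) powr p) \<in> borel_measurable borel"
proof -
  have "continuous_on S (\<lambda>z. norm (f z) powr p)"
    using assms by (intro continuous_on_powr' continuous_intros) auto
  from borel_measurable_continuous_on_indicator[OF assms(1) this] show ?thesis
    by simp
qed

text \<open>Mean value property, then the pointwise bound \<open>le_add_powr\<close> under the integral.\<close>

lemma measure_cball_mult_norm_le:
  fixes h :: "complex \<Rightarrow> complex"
  assumes h: "h holomorphic_on ball 0 r" and d: "0 < d" "d < r" and p: "1 < p" and "0 \<le> J" "0 < s"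
    and J: "(\<integral>\<^sup>+z. ennreal (indicator (cball 0 d) z * cmod (h z) powr p) \<partial>lborel) \<le> ennreal J"
  defines "m \<equiv> measure lebesgue (cball (0::complex) d)"
  shows "m * cmod (h 0) \<le> s * m + s powr (1 - p) * J"
proof -
  have "0 < m"
    using d by (simp add: m_def)
  have cont: "continuous_on (cball 0 d) h"
    using h d by (auto intro: continuous_on_subset holomorphic_on_imp_continuous_on)
  have [measurable]: "cball (0::complex) d \<in> sets borel"
    by simp
  have [measurable]: "(\<lambda>z. indicator (cball 0 d) z * cmod (h z) powr p) \<in> borel_measurable borel"
    using cont p by (intro borel_measurable_indicator_powr) auto
  have m: "emeasure lborel (cball (0::complex) d) = ennreal m"
    using emeasure_lborel_cball_finite[of "0::complex" d]
    by (simp add: m_def emeasure_eq_ennreal_measure measure_completion)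
  have "ennreal (m * cmod (h 0)) = ennreal (norm (\<integral>z. indicator (cball 0 d) z *\<^sub>R h z \<partial>lborel))"
    using integral_cball_holomorphic[OF h d] \<open>0 < m\<close> by (simp add: m_def)
  also have "\<dots> \<le> (\<integral>\<^sup>+z. norm (indicator (cball 0 d) z *\<^sub>R h z) \<partial>lborel)"
    by (intro integral_norm_bound_ennreal borel_integrable_compact cont) simp
  also have "\<dots> \<le> (\<integral>\<^sup>+z. ennreal s * indicator (cball 0 d) z +
      ennreal (s powr (1 - p)) * ennreal (indicator (cball 0 d) z * cmod (h z) powr p) \<partial>lborel)"
  proof (rule nn_integral_mono)
    fix z
    show "ennreal (norm (indicator (cball 0 d) z *\<^sub>R h z)) \<le> ennreal s * indicator (cball 0 d) z +
        ennreal (s powr (1 - p)) * ennreal (indicator (cball 0 d) z * cmod (h z) powr p)"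
    proof (cases "z \<in> cball 0 d")
      case True
      have "ennreal (cmod (h z)) \<le> ennreal (s + s powr (1 - p) * cmod (h z) powr p)"
        using \<open>0 < s\<close> p by (intro ennreal_leI le_add_powr) auto
      also have "\<dots> = ennreal s + ennreal (s powr (1 - p)) * ennreal (cmod (h z) powr p)"
        using \<open>0 < s\<close> by (simp add: ennreal_plus ennreal_mult)
      finally show ?thesis
        using True by simp
    qed simp
  qed
  also have "\<dots> = ennreal s * emeasure lborel (cball (0::complex) d) + ennreal (s powr (1 - p)) *
      (\<integral>\<^sup>+z. ennreal (indicator (cball 0 d) z * cmod (h z) powr p) \<partial>lborel)"
    by (subst nn_integral_add) (auto simp: nn_integral_cmult nn_integral_cmult_indicator)
  also have "\<dots> \<le> ennreal s * ennreal m + ennreal (s powr (1 - p)) * ennreal J"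
    unfolding m using J by (intro add_mono mult_left_mono) auto
  also have "\<dots> = ennreal (s * m + s powr (1 - p) * J)"
    using \<open>0 < s\<close> \<open>0 < m\<close> \<open>0 \<le> J\<close> by (simp add: ennreal_plus ennreal_mult)
  finally show ?thesis
    using \<open>0 < s\<close> \<open>0 < m\<close> \<open>0 \<le> J\<close> by (subst (asm) ennreal_le_iff) auto
qed

lemma norm_le_integral_cball_powr:
  fixes h :: "complex \<Rightarrow> complex"
  assumes h: "h holomorphic_on ball w r" and d: "0 < d" "d < r" and p: "1 < p" and "0 \<le> J"
    and J: "(\<integral>\<^sup>+z. ennreal (indicator (cball w d) z * cmod (h z) powr p) \<partial>lborel) \<le> ennreal J"
  shows "cmod (h w) \<le> (1 + 1 / measure lebesgue (cball (0::complex) d)) * J powr (1 / p)"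
proof (rule le_of_forall_le_add_powr[OF _ \<open>0 \<le> J\<close> p])
  show "0 < measure lebesgue (cball (0::complex) d)"
    using d by simp
  define h' where "h' z = h (w + z)" for z
  have "(h \<circ> (\<lambda>z. w + z)) holomorphic_on ball 0 r"
    by (rule holomorphic_on_compose_gen[OF _ h]) (auto intro!: holomorphic_intros simp: dist_norm)
  then have h': "h' holomorphic_on ball 0 r"
    by (simp add: h'_def[abs_def] o_def)
  have "continuous_on (cball w d) h"
    using h d by (auto intro: continuous_on_subset holomorphic_on_imp_continuous_on)
  then have [measurable]: "(\<lambda>z. indicator (cball w d) z * cmod (h z) powr p) \<in> borel_measurable borel"
    using p by (intro borel_measurable_indicator_powr) auto
  have "(\<integral>\<^sup>+z. ennreal (indicator (cball 0 d) z * cmod (h' z) powr p) \<partial>lborel)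
      = (\<integral>\<^sup>+z. ennreal (indicator (cball w d) (w + z) * cmod (h (w + z)) powr p) \<partial>lborel)"
    by (intro nn_integral_cong) (simp add: h'_def indicator_def dist_norm)
  also have "\<dots> = (\<integral>\<^sup>+z. ennreal (indicator (cball w d) z * cmod (h z) powr p) \<partial>lborel)"
    by (rule nn_integral_lborel_translate[of "\<lambda>z. ennreal (indicator (cball w d) z * cmod (h z) powr p)"])
      measurable
  finally have J': "(\<integral>\<^sup>+z. ennreal (indicator (cball 0 d) z * cmod (h' z) powr p) \<partial>lborel) \<le> ennreal J"
    using J by simp
  show "measure lebesgue (cball (0::complex) d) * cmod (h w)
      \<le> s * measure lebesgue (cball (0::complex) d) + s powr (1 - p) * J"
    if "0 < s" for s
    using measure_cball_mult_norm_le[OF h' d p \<open>0 \<le> J\<close> that J'] by (simp add: h'_def)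
qed

section \<open>Weighted \<open>L\<^sup>p\<close> integrals and Minkowski's inequality\<close>

text \<open>Scaled convexity of \<open>t \<mapsto> t powr p\<close>, with the weights \<open>A, B\<close> standing for the norms of the summands.\<close>

lemma powr_add_le_weighted:
  fixes x y A B p :: real
  assumes "0 \<le> x" "0 \<le> y" "0 < A" "0 < B" "1 < p"
  shows "(x + y) powr p \<le> (A + B) powr (p - 1) * (A powr (1 - p) * x powr p + B powr (1 - p) * y powr p)"
proof -
  define S where "S = A + B"
  have single: "z powr p \<le> S powr (p - 1) * (C powr (1 - p) * z powr p)" if "0 < C" "C \<le> S" for C z
  proof -
    have "z powr p = (C powr (p - 1) * C powr (1 - p)) * z powr p"
      using that by (simp add: powr_add[symmetric])
    also have "\<dots> \<le> (S powr (p - 1) * C powr (1 - p)) * z powr p"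
      using that assms by (intro mult_right_mono powr_mono2) auto
    finally show ?thesis
      by (simp add: mult.assoc)
  qed
  consider "x = 0" | "y = 0" | "0 < x" "0 < y"
    using assms by linarith
  then show ?thesis
  proof cases
    case 1
    then show ?thesis
      using single[of B y] assms by (simp add: S_def)
  next
    case 2
    then show ?thesis
      using single[of A x] assms by (simp add: S_def)
  next
    case 3
    define t where "t = B / S"
    have "0 < S"
      using assms by (simp add: S_def)
    have t: "0 \<le> t" "t \<le> 1" "1 - t = A / S"
      using assms by (auto simp: t_def S_def field_simps)
    have cv: "((1 - t) *\<^sub>R (x / A) + t *\<^sub>R (y / B)) powr p \<le> (1 - t) * (x / A) powr p + t * (y / B) powr p"
      by (rule convex_onD[OF powr_convex]) (use assms t 3 in auto)
    have mid: "(1 - t) *\<^sub>R (x / A) + t *\<^sub>R (y / B) = (x + y) / S"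
      using assms \<open>0 < S\<close> unfolding t(3) by (simp add: t_def field_simps)
    have convex: "((x + y) / S) powr p \<le> (A / S) * (x / A) powr p + (B / S) * (y / B) powr p"
      using cv unfolding mid unfolding t(3) by (simp add: t_def)
    have "(x + y) powr p = S powr p * ((x + y) / S) powr p"
      using assms 3 by (simp add: S_def powr_divide)
    also have "\<dots> \<le> S powr p * ((A / S) * (x / A) powr p + (B / S) * (y / B) powr p)"
      using convex by (intro mult_left_mono) auto
    also have "\<dots> = (S powr p / S) * ((A / A powr p) * x powr p + (B / B powr p) * y powr p)"
      using assms 3 \<open>0 < S\<close> by (simp add: powr_divide field_simps)
    also have "S powr p / S = S powr (p - 1)"
      using \<open>0 < S\<close> by (simp add: powr_diff)
    also have "A / A powr p = A powr (1 - p)"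
      using assms by (simp add: powr_diff)
    also have "B / B powr p = B powr (1 - p)"
      using assms by (simp add: powr_diff)
    finally show ?thesis
      by (simp add: S_def)
  qed
qed

definition weighted_Lp_integral :: "'a measure \<Rightarrow> ('a \<Rightarrow> real) \<Rightarrow> real \<Rightarrow> ('a \<Rightarrow> complex) \<Rightarrow> ennreal" where
  "weighted_Lp_integral M W p f = (\<integral>\<^sup>+z. ennreal (cmod (f z) powr p * W z) \<partial>M)"

definition weighted_Lp_norm :: "'a measure \<Rightarrow> ('a \<Rightarrow> real) \<Rightarrow> real \<Rightarrow> ('a \<Rightarrow> complex) \<Rightarrow> real" where
  "weighted_Lp_norm M W p f = enn2real (weighted_Lp_integral M W p f) powr (1 / p)"

lemma weighted_Lp_norm_nonneg [simp]: "0 \<le> weighted_Lp_norm M W p f"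
  by (simp add: weighted_Lp_norm_def)

lemma weighted_Lp_integral_eq_norm_powr:
  assumes "weighted_Lp_integral M W p f < \<infinity>" "0 < p"
  shows "weighted_Lp_integral M W p f = ennreal (weighted_Lp_norm M W p f powr p)"
  using assms by (simp add: weighted_Lp_norm_def powr_powr less_top)

lemma weighted_Lp_norm_le:
  assumes "weighted_Lp_integral M W p f \<le> ennreal (e powr p)" "0 < p" "0 \<le> e"
  shows "weighted_Lp_norm M W p f \<le> e"
proof -
  have "weighted_Lp_norm M W p f \<le> (e powr p) powr (1 / p)"
    unfolding weighted_Lp_norm_def using assms by (intro powr_mono2 enn2real_leI) auto
  then show ?thesis
    using assms by (simp add: powr_powr)
qed

lemma weighted_Lp_integral_cmult:
  assumes "0 < p" "\<And>z. 0 \<le> W z"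
    and "(\<lambda>z. ennreal (cmod (f z) powr p * W z)) \<in> borel_measurable M"
  shows "weighted_Lp_integral M W p (\<lambda>z. c * f z) = ennreal (cmod c powr p) * weighted_Lp_integral M W p f"
proof -
  have "weighted_Lp_integral M W p (\<lambda>z. c * f z)
      = (\<integral>\<^sup>+z. ennreal (cmod c powr p) * ennreal (cmod (f z) powr p * W z) \<partial>M)"
    unfolding weighted_Lp_integral_def using assms
    by (intro nn_integral_cong) (simp add: norm_mult powr_mult ennreal_mult mult.assoc)
  also have "\<dots> = ennreal (cmod c powr p) * weighted_Lp_integral M W p f"
    unfolding weighted_Lp_integral_def by (rule nn_integral_cmult[OF assms(3)])
  finally show ?thesis .
qed

lemma weighted_Lp_norm_cmult:
  assumes "0 < p" "\<And>z. 0 \<le> W z"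
    and "(\<lambda>z. ennreal (cmod (f z) powr p * W z)) \<in> borel_measurable M"
  shows "weighted_Lp_norm M W p (\<lambda>z. c * f z) = cmod c * weighted_Lp_norm M W p f"
  using weighted_Lp_integral_cmult[OF assms] assms(1)
  by (simp add: weighted_Lp_norm_def enn2real_mult powr_mult powr_powr)

text \<open>Minkowski's inequality; the perturbation by \<open>e\<close> avoids dividing by a vanishing norm.\<close>

lemma weighted_Lp_integral_add_le:
  assumes p: "1 < p" and W: "\<And>z. 0 \<le> W z"
    and mf: "(\<lambda>z. ennreal (cmod (f z) powr p * W z)) \<in> borel_measurable M"
    and mg: "(\<lambda>z. ennreal (cmod (g z) powr p * W z)) \<in> borel_measurable M"
    and ff: "weighted_Lp_integral M W p f < \<infinity>" and fg: "weighted_Lp_integral M W p g < \<infinity>"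
    and e: "0 < e"
  shows "weighted_Lp_integral M W p (\<lambda>z. f z + g z)
    \<le> ennreal ((weighted_Lp_norm M W p f + weighted_Lp_norm M W p g + 2 * e) powr p)"
proof -
  define a where "a = weighted_Lp_norm M W p f"
  define b where "b = weighted_Lp_norm M W p g"
  define A where "A = a + e"
  define B where "B = b + e"
  have "0 \<le> a" "0 \<le> b" "0 < A" "0 < B" "a \<le> A" "b \<le> B"
    using e by (auto simp: a_def b_def A_def B_def intro: add_nonneg_pos)
  have "weighted_Lp_integral M W p (\<lambda>z. f z + g z) \<le> (\<integral>\<^sup>+z. ennreal ((A + B) powr (p - 1)) *
      (ennreal (A powr (1 - p)) * ennreal (cmod (f z) powr p * W z) +
       ennreal (B powr (1 - p)) * ennreal (cmod (g z) powr p * W z)) \<partial>M)"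
    unfolding weighted_Lp_integral_def
  proof (rule nn_integral_mono)
    fix z
    have "cmod (f z + g z) powr p \<le> (cmod (f z) + cmod (g z)) powr p"
      using p by (intro powr_mono2 norm_triangle_ineq) auto
    also have "\<dots> \<le> (A + B) powr (p - 1) * (A powr (1 - p) * cmod (f z) powr p + B powr (1 - p) * cmod (g z) powr p)"
      using \<open>0 < A\<close> \<open>0 < B\<close> p by (intro powr_add_le_weighted) auto
    finally have "cmod (f z + g z) powr p * W z \<le>
        (A + B) powr (p - 1) * (A powr (1 - p) * cmod (f z) powr p + B powr (1 - p) * cmod (g z) powr p) * W z"
      using W[of z] by (rule mult_right_mono)
    then have "cmod (f z + g z) powr p * W z \<le>
        (A + B) powr (p - 1) * (A powr (1 - p) * (cmod (f z) powr p * W z) + B powr (1 - p) * (cmod (g z) powr p * W z))"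
      by (simp add: algebra_simps)
    then have "ennreal (cmod (f z + g z) powr p * W z) \<le> ennreal ((A + B) powr (p - 1) *
        (A powr (1 - p) * (cmod (f z) powr p * W z) + B powr (1 - p) * (cmod (g z) powr p * W z)))"
      by (rule ennreal_leI)
    also have "\<dots> = ennreal ((A + B) powr (p - 1)) *
      (ennreal (A powr (1 - p)) * ennreal (cmod (f z) powr p * W z) +
       ennreal (B powr (1 - p)) * ennreal (cmod (g z) powr p * W z))"
      using W[of z] by (simp add: ennreal_mult ennreal_plus)
    finally show "ennreal (cmod (f z + g z) powr p * W z) \<le> \<dots>" .
  qed
  also have "\<dots> = ennreal ((A + B) powr (p - 1)) * (ennreal (A powr (1 - p)) * weighted_Lp_integral M W p f +
      ennreal (B powr (1 - p)) * weighted_Lp_integral M W p g)"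
    unfolding weighted_Lp_integral_def using mf mg by (simp add: nn_integral_cmult nn_integral_add)
  also have "\<dots> = ennreal ((A + B) powr (p - 1) * (A powr (1 - p) * a powr p + B powr (1 - p) * b powr p))"
    using ff fg p
    by (simp add: weighted_Lp_integral_eq_norm_powr a_def b_def ennreal_mult ennreal_plus)
  also have "\<dots> \<le> ennreal ((A + B) powr (p - 1) * (A powr (1 - p) * A powr p + B powr (1 - p) * B powr p))"
    using \<open>0 \<le> a\<close> \<open>0 \<le> b\<close> \<open>a \<le> A\<close> \<open>b \<le> B\<close> p
    by (intro ennreal_leI mult_left_mono add_mono powr_mono2) auto
  also have "(A + B) powr (p - 1) * (A powr (1 - p) * A powr p + B powr (1 - p) * B powr p) = (A + B) powr p"
    using \<open>0 < A\<close> \<open>0 < B\<close> powr_mult_base[of "A + B" "p - 1"]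
    by (simp add: powr_add[symmetric] mult.commute)
  also have "A + B = weighted_Lp_norm M W p f + weighted_Lp_norm M W p g + 2 * e"
    by (simp add: A_def B_def a_def b_def)
  finally show ?thesis .
qed

lemma
  assumes "1 < p" "\<And>z. 0 \<le> W z"
    and "(\<lambda>z. ennreal (cmod (f z) powr p * W z)) \<in> borel_measurable M"
    and "(\<lambda>z. ennreal (cmod (g z) powr p * W z)) \<in> borel_measurable M"
    and "weighted_Lp_integral M W p f < \<infinity>" "weighted_Lp_integral M W p g < \<infinity>"
  shows weighted_Lp_integral_add_finite: "weighted_Lp_integral M W p (\<lambda>z. f z + g z) < \<infinity>"
    and weighted_Lp_norm_triangle:
      "weighted_Lp_norm M W p (\<lambda>z. f z + g z) \<le> weighted_Lp_norm M W p f + weighted_Lp_norm M W p g"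
proof -
  note le = weighted_Lp_integral_add_le[OF assms]
  show finite: "weighted_Lp_integral M W p (\<lambda>z. f z + g z) < \<infinity>"
    using le[of 1] by (simp add: le_less_trans)
  show "weighted_Lp_norm M W p (\<lambda>z. f z + g z) \<le> weighted_Lp_norm M W p f + weighted_Lp_norm M W p g"
  proof (rule field_le_epsilon)
    fix e :: real
    assume "0 < e"
    then show "weighted_Lp_norm M W p (\<lambda>z. f z + g z) \<le> weighted_Lp_norm M W p f + weighted_Lp_norm M W p g + e"
      using le[of "e / 2"] assms(1) by (intro weighted_Lp_norm_le) auto
  qed
qed

lemma weighted_Lp_integral_le_of_tendsto:
  assumes p: "0 < p"
    and meas: "\<And>m. (\<lambda>z. ennreal (cmod (f m z) powr p * W z)) \<in> borel_measurable M"
    and lim: "\<And>z. W z \<noteq> 0 \<Longrightarrow> (\<lambda>m. f m z) \<longlonglongrightarrow> g z"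
    and bound: "eventually (\<lambda>m. weighted_Lp_integral M W p (f m) \<le> B) sequentially"
  shows "weighted_Lp_integral M W p g \<le> B"
proof -
  have pointwise: "ennreal (cmod (g z) powr p * W z) = liminf (\<lambda>m. ennreal (cmod (f m z) powr p * W z))" for z
  proof (cases "W z = 0")
    case False
    have "(\<lambda>m. ennreal (cmod (f m z) powr p * W z)) \<longlonglongrightarrow> ennreal (cmod (g z) powr p * W z)"
      by (intro tendsto_ennrealI tendsto_mult tendsto_const tendsto_powr' tendsto_norm lim False)
        (use p in auto)
    then show ?thesis
      by (simp add: lim_imp_Liminf)
  qed (simp add: Liminf_const)
  have "weighted_Lp_integral M W p g = (\<integral>\<^sup>+z. liminf (\<lambda>m. ennreal (cmod (f m z) powr p * W z)) \<partial>M)"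
    unfolding weighted_Lp_integral_def pointwise ..
  also have "\<dots> \<le> liminf (\<lambda>m. weighted_Lp_integral M W p (f m))"
    unfolding weighted_Lp_integral_def by (rule nn_integral_liminf[OF meas])
  also have "\<dots> \<le> B"
    using bound by (intro Liminf_le) auto
  finally show ?thesis .
qed

section \<open>The weighted Bergman space\<close>

lemma open_disc: "open (disc R)"
proof -
  have "disc R = (\<lambda>z. ereal (cmod z)) -` {..<R}"
    by (auto simp: disc_def)
  then show ?thesis
    by (simp add: open_vimage continuous_on_ereal continuous_intros)
qed

lemma holomorphic_limit_of_uniformly_Cauchy_on_compact:
  fixes F :: "nat \<Rightarrow> complex \<Rightarrow> complex"
  assumes "open S" and hol: "\<And>n. F n holomorphic_on S"
    and Cauchy: "\<And>K. compact K \<Longrightarrow> K \<subseteq> S \<Longrightarrow> uniformly_Cauchy_on K F"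
  defines "g \<equiv> \<lambda>z. lim (\<lambda>n. F n z)"
  shows "g holomorphic_on S" and "\<And>K. compact K \<Longrightarrow> K \<subseteq> S \<Longrightarrow> uniform_limit K F g sequentially"
proof -
  show ulim: "uniform_limit K F g sequentially" if K: "compact K" "K \<subseteq> S" for K
  proof -
    obtain l where l: "uniform_limit K F l sequentially"
      using Cauchy_uniformly_convergent[OF Cauchy[OF K]] unfolding uniformly_convergent_on_def by blast
    have "l z = g z" if "z \<in> K" for z
      using tendsto_uniform_limitI[OF l that] unfolding g_def by (rule limI[symmetric])
    then have "uniform_limit K F l sequentially \<longleftrightarrow> uniform_limit K F g sequentially"
      by (intro uniform_limit_cong') auto
    with l show ?thesis
      by simp
  qed
  show "g holomorphic_on S"
  proof (rule holomorphic_uniform_sequence[OF \<open>open S\<close> hol])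
    fix z
    assume "z \<in> S"
    then obtain d where "0 < d" "cball z d \<subseteq> S"
      using \<open>open S\<close> open_contains_cball by blast
    then show "\<exists>d>0. cball z d \<subseteq> S \<and> uniform_limit (cball z d) F g sequentially"
      using ulim[OF compact_cball] by blast
  qed
qed

locale radial_weight_space =
  fixes p :: real and R :: ereal and \<nu> :: "real \<Rightarrow> real"
  assumes p: "1 < p" and weight: "radial_weight R \<nu>"
begin

text \<open>Extending the weight by zero lets all integrals be taken over \<open>\<complex>\<close> rather than over the disc.\<close>

definition \<omega> :: "complex \<Rightarrow> real" where
  "\<omega> z = indicator (disc R) z * \<nu> (cmod z)"

lemma \<omega>_nonneg: "0 \<le> \<omega> z"
  using weight by (auto simp: \<omega>_def radial_weight_def disc_def indicator_def)

lemma \<omega>_measurable: "\<omega> \<in> borel_measurable lebesgue"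
proof -
  have "set_integrable lebesgue (disc R) (\<lambda>z. \<nu> (cmod z))"
    using weight by (simp add: radial_weight_def)
  then show ?thesis
    unfolding set_integrable_def \<omega>_def[abs_def] by (simp add: borel_measurable_integrable)
qed

lemma Ap_integral_eq: "Ap_integral p R \<nu> f = weighted_Lp_integral lebesgue \<omega> p f"
  unfolding Ap_integral_def weighted_Lp_integral_def \<omega>_def
  by (intro nn_integral_cong) (auto simp: indicator_def)

lemma Ap_norm_eq: "Ap_norm p R \<nu> f = weighted_Lp_norm lebesgue \<omega> p f"
  by (simp add: Ap_norm_def weighted_Lp_norm_def Ap_integral_eq)

lemma mem_Ap_space_iff:
  "f \<in> Ap_space p R \<nu> \<longleftrightarrow> f holomorphic_on disc R \<and> weighted_Lp_integral lebesgue \<omega> p f < \<infinity>"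
  by (simp add: Ap_space_def Ap_integral_eq)

lemma integrand_measurable:
  assumes "continuous_on (disc R) f"
  shows "(\<lambda>z. ennreal (cmod (f z) powr p * \<omega> z)) \<in> borel_measurable lebesgue"
proof -
  have "(\<lambda>z. indicator (disc R) z * cmod (f z) powr p) \<in> borel_measurable borel"
    using assms p open_disc by (intro borel_measurable_indicator_powr) auto
  then have "(\<lambda>z. indicator (disc R) z * cmod (f z) powr p) \<in> borel_measurable lborel"
    by simp
  then have "(\<lambda>z. indicator (disc R) z * cmod (f z) powr p) \<in> borel_measurable lebesgue"
    by (rule measurable_completion)
  then have "(\<lambda>z. indicator (disc R) z * cmod (f z) powr p * \<omega> z) \<in> borel_measurable lebesgue"
    using \<omega>_measurable by measurable
  also have "(\<lambda>z. indicator (disc R) z * cmod (f z) powr p * \<omega> z) = (\<lambda>z. cmod (f z) powr p * \<omega> z)"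
    by (auto simp: \<omega>_def indicator_def)
  finally show ?thesis
    by simp
qed

lemma Ap_space_integrand_measurable:
  "f \<in> Ap_space p R \<nu> \<Longrightarrow> (\<lambda>z. ennreal (cmod (f z) powr p * \<omega> z)) \<in> borel_measurable lebesgue"
  by (simp add: mem_Ap_space_iff holomorphic_on_imp_continuous_on integrand_measurable)

lemma Ap_space_zero: "(\<lambda>z. 0) \<in> Ap_space p R \<nu>"
  by (simp add: mem_Ap_space_iff weighted_Lp_integral_def)

lemma Ap_space_add:
  "f \<in> Ap_space p R \<nu> \<Longrightarrow> g \<in> Ap_space p R \<nu> \<Longrightarrow> (\<lambda>z. f z + g z) \<in> Ap_space p R \<nu>"
  using weighted_Lp_integral_add_finite[OF p \<omega>_nonneg Ap_space_integrand_measurable Ap_space_integrand_measurable]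
  by (auto simp: mem_Ap_space_iff intro: holomorphic_intros)

lemma Ap_space_cmult: "f \<in> Ap_space p R \<nu> \<Longrightarrow> (\<lambda>z. c * f z) \<in> Ap_space p R \<nu>"
  using weighted_Lp_integral_cmult[OF _ \<omega>_nonneg Ap_space_integrand_measurable] p
  by (auto simp: mem_Ap_space_iff ennreal_mult_less_top intro: holomorphic_intros)

lemma Ap_space_diff:
  "f \<in> Ap_space p R \<nu> \<Longrightarrow> g \<in> Ap_space p R \<nu> \<Longrightarrow> (\<lambda>z. f z - g z) \<in> Ap_space p R \<nu>"
  using Ap_space_add[of f "\<lambda>z. (-1) * g z"] Ap_space_cmult[of g "-1"] by simp

lemma Ap_norm_nonneg: "0 \<le> Ap_norm p R \<nu> f"
  by (simp add: Ap_norm_eq)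

lemma Ap_norm_triangle:
  "f \<in> Ap_space p R \<nu> \<Longrightarrow> g \<in> Ap_space p R \<nu> \<Longrightarrow>
    Ap_norm p R \<nu> (\<lambda>z. f z + g z) \<le> Ap_norm p R \<nu> f + Ap_norm p R \<nu> g"
  unfolding Ap_norm_eq
  using weighted_Lp_norm_triangle[OF p \<omega>_nonneg Ap_space_integrand_measurable Ap_space_integrand_measurable]
  by (auto simp: mem_Ap_space_iff)

lemma Ap_norm_cmult: "f \<in> Ap_space p R \<nu> \<Longrightarrow> Ap_norm p R \<nu> (\<lambda>z. c * f z) = cmod c * Ap_norm p R \<nu> f"
  unfolding Ap_norm_eq using weighted_Lp_norm_cmult[OF _ \<omega>_nonneg Ap_space_integrand_measurable] p by auto


lemma norm_le_Ap_norm_local: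
  assumes f: "f \<in> Ap_space p R \<nu>" and "0 < \<delta>" "0 < c" and ball: "ball w (2 * \<delta>) \<subseteq> disc R"
    and lower: "\<And>\<zeta>. \<zeta> \<in> cball w \<delta> \<Longrightarrow> c \<le> \<omega> \<zeta>"
  shows "cmod (f w) \<le> (1 + 1 / measure lebesgue (cball (0::complex) \<delta>)) * (1 / c) powr (1 / p) * Ap_norm p R \<nu> f"
proof -
  define N where "N = Ap_norm p R \<nu> f"
  have hol: "f holomorphic_on disc R" and fin: "weighted_Lp_integral lebesgue \<omega> p f < \<infinity>"
    using f by (auto simp: mem_Ap_space_iff)
  have "(\<integral>\<^sup>+\<zeta>. ennreal (indicator (cball w \<delta>) \<zeta> * cmod (f \<zeta>) powr p) \<partial>lborel)
      = (\<integral>\<^sup>+\<zeta>. ennreal (indicator (cball w \<delta>) \<zeta> * cmod (f \<zeta>) powr p) \<partial>lebesgue)"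
    by (rule nn_integral_completion[symmetric])
  also have "\<dots> \<le> (\<integral>\<^sup>+\<zeta>. ennreal (1 / c) * ennreal (cmod (f \<zeta>) powr p * \<omega> \<zeta>) \<partial>lebesgue)"
  proof (rule nn_integral_mono)
    fix \<zeta>
    show "ennreal (indicator (cball w \<delta>) \<zeta> * cmod (f \<zeta>) powr p) \<le> ennreal (1 / c) * ennreal (cmod (f \<zeta>) powr p * \<omega> \<zeta>)"
    proof (cases "\<zeta> \<in> cball w \<delta>")
      case True
      then have "cmod (f \<zeta>) powr p \<le> 1 / c * (cmod (f \<zeta>) powr p * \<omega> \<zeta>)"
        using lower[of \<zeta>] \<open>0 < c\<close> mult_right_mono[of c "\<omega> \<zeta>" "cmod (f \<zeta>) powr p"]
        by (simp add: field_simps)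
      then show ?thesis
        using True \<open>0 < c\<close> \<omega>_nonneg[of \<zeta>] by (simp add: ennreal_mult[symmetric] ennreal_leI)
    qed simp
  qed
  also have "\<dots> = ennreal (1 / c) * ennreal (N powr p)"
    using fin p Ap_space_integrand_measurable[OF f]
    by (simp add: nn_integral_cmult weighted_Lp_integral_def[symmetric] weighted_Lp_integral_eq_norm_powr
        N_def Ap_norm_eq)
  also have "\<dots> = ennreal (N powr p / c)"
    using \<open>0 < c\<close> by (simp add: ennreal_mult[symmetric])
  finally have "cmod (f w) \<le> (1 + 1 / measure lebesgue (cball (0::complex) \<delta>)) * (N powr p / c) powr (1 / p)"
    using \<open>0 < c\<close> \<open>0 < \<delta>\<close> p holomorphic_on_subset[OF hol ball]
    by (intro norm_le_integral_cball_powr[where r = "2 * \<delta>"]) auto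
  also have "(N powr p / c) powr (1 / p) = (1 / c) powr (1 / p) * N"
    using \<open>0 < c\<close> p by (simp add: N_def Ap_norm_nonneg powr_divide powr_powr)
  finally show ?thesis
    by (simp add: N_def mult.assoc)
qed

end

locale radial_weight_space_bounded_below = radial_weight_space +
  assumes bounded_below: "\<exists>R'. 0 \<le> R' \<and> ereal R' < R \<and>
    (\<forall>y. R' < y \<and> ereal y < R \<longrightarrow> Inf {\<nu> x | x. R' \<le> x \<and> x < y} > 0)"
begin

lemma annulus_weight_bounded_below:
  assumes "compact K" "K \<subseteq> disc R"
  obtains \<delta> c \<rho> where "0 < \<delta>" "0 < c" "K \<subseteq> cball 0 \<rho>" "ball 0 (\<rho> + 2 * \<delta>) \<subseteq> disc R"
    "\<And>\<zeta>. \<rho> - \<delta> \<le> cmod \<zeta> \<Longrightarrow> cmod \<zeta> \<le> \<rho> + \<delta> \<Longrightarrow> c \<le> \<omega> \<zeta>"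
proof -
  obtain R0 where R0: "0 \<le> R0" "ereal R0 < R"
    and inf_pos: "\<And>y. R0 < y \<Longrightarrow> ereal y < R \<Longrightarrow> Inf {\<nu> x | x. R0 \<le> x \<and> x < y} > 0"
    using bounded_below by blast
  obtain r0 where r0: "ereal r0 < R" "K \<subseteq> cball 0 r0"
  proof (cases "K = {}")
    case False
    obtain z0 where "z0 \<in> K" and max: "\<And>z. z \<in> K \<Longrightarrow> cmod z \<le> cmod z0"
      using continuous_attains_sup[OF assms(1) False continuous_on_norm_id] by auto
    show ?thesis
    proof (rule that)
      show "ereal (cmod z0) < R"
        using \<open>z0 \<in> K\<close> assms(2) by (auto simp: disc_def)
      show "K \<subseteq> cball 0 (cmod z0)"
        using max by auto
    qed
  qed (use R0 in auto)
  define a where "a = max R0 r0"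
  have "ereal a < R"
    using r0 R0 by (simp add: a_def)
  then obtain b where "a < b" "ereal b < R"
    using ereal_dense2 by force
  have below_b: "x < b \<Longrightarrow> ereal x < R" for x
    using \<open>ereal b < R\<close> by (meson ereal_less_eq(3) le_less_trans less_imp_le)
  define c where "c = Inf {\<nu> x | x. R0 \<le> x \<and> x < b}"
  have "0 < c"
    unfolding c_def using \<open>a < b\<close> \<open>ereal b < R\<close> by (intro inf_pos) (auto simp: a_def)
  have c_le: "c \<le> \<nu> x" if "R0 \<le> x" "x < b" for x
    unfolding c_def
  proof (rule cInf_lower)
    have "0 \<le> \<nu> x" if "0 \<le> x" "ereal x < R" for x
      using weight that by (auto simp: radial_weight_def)
    then show "bdd_below {\<nu> x | x. R0 \<le> x \<and> x < b}"
      using R0 below_b by (intro bdd_belowI[of _ 0]) auto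
  qed (use that in auto)
  show ?thesis
  proof (rule that[of "(b - a) / 4" c "(a + b) / 2"])
    show "0 < (b - a) / 4" "0 < c"
      using \<open>a < b\<close> \<open>0 < c\<close> by auto
    show "K \<subseteq> cball 0 ((a + b) / 2)"
      using r0(2) \<open>a < b\<close> by (force simp: a_def)
    show "ball 0 ((a + b) / 2 + 2 * ((b - a) / 4)) \<subseteq> disc R"
      using below_b by (auto simp: disc_def field_simps)
    show "c \<le> \<omega> \<zeta>" if "(a + b) / 2 - (b - a) / 4 \<le> cmod \<zeta>" "cmod \<zeta> \<le> (a + b) / 2 + (b - a) / 4" for \<zeta>
      using that c_le[of "cmod \<zeta>"] below_b[of "cmod \<zeta>"] \<open>a < b\<close>
      by (auto simp: \<omega>_def disc_def a_def field_simps)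
  qed
qed

lemma norm_le_Ap_norm_on_circle:
  assumes f: "f \<in> Ap_space p R \<nu>" and "0 < \<delta>" "0 < c" and disc: "ball 0 (\<rho> + 2 * \<delta>) \<subseteq> disc R"
    and lower: "\<And>\<zeta>. \<rho> - \<delta> \<le> cmod \<zeta> \<Longrightarrow> cmod \<zeta> \<le> \<rho> + \<delta> \<Longrightarrow> c \<le> \<omega> \<zeta>"
    and "cmod w = \<rho>"
  shows "cmod (f w) \<le> (1 + 1 / measure lebesgue (cball (0::complex) \<delta>)) * (1 / c) powr (1 / p) * Ap_norm p R \<nu> f"
proof (rule norm_le_Ap_norm_local[OF f \<open>0 < \<delta>\<close> \<open>0 < c\<close>])
  have near: "\<bar>cmod \<zeta> - \<rho>\<bar> \<le> dist w \<zeta>" for \<zeta>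
    using \<open>cmod w = \<rho>\<close> norm_triangle_ineq3[of \<zeta> w] by (simp add: dist_norm norm_minus_commute)
  show "ball w (2 * \<delta>) \<subseteq> disc R"
  proof
    fix \<zeta>
    assume "\<zeta> \<in> ball w (2 * \<delta>)"
    then have "cmod \<zeta> < \<rho> + 2 * \<delta>"
      using near[of \<zeta>] by simp
    then show "\<zeta> \<in> disc R"
      using disc by auto
  qed
  show "c \<le> \<omega> \<zeta>" if "\<zeta> \<in> cball w \<delta>" for \<zeta>
    using that near[of \<zeta>] by (intro lower) auto
qed

lemma norm_le_Ap_norm_on_compact:
  assumes "compact K" "K \<subseteq> disc R"
  obtains C where "0 \<le> C" "\<And>z f. z \<in> K \<Longrightarrow> f \<in> Ap_space p R \<nu> \<Longrightarrow> cmod (f z) \<le> C * Ap_norm p R \<nu> f"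
proof -
  obtain \<delta> c \<rho> where "0 < \<delta>" "0 < c" "K \<subseteq> cball 0 \<rho>" and disc: "ball 0 (\<rho> + 2 * \<delta>) \<subseteq> disc R"
    and lower: "\<And>\<zeta>. \<rho> - \<delta> \<le> cmod \<zeta> \<Longrightarrow> cmod \<zeta> \<le> \<rho> + \<delta> \<Longrightarrow> c \<le> \<omega> \<zeta>"
    using annulus_weight_bounded_below[OF assms] by blast
  have "cball 0 \<rho> \<subseteq> ball 0 (\<rho> + 2 * \<delta>)"
    using \<open>0 < \<delta>\<close> by (auto simp: subset_eq)
  with disc have "cball 0 \<rho> \<subseteq> disc R"
    by (rule order_trans[rotated])
  show ?thesis
  proof (rule that)
    fix z f
    assume "z \<in> K" and f: "f \<in> Ap_space p R \<nu>"
    then have hol: "f holomorphic_on disc R"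
      by (simp add: mem_Ap_space_iff)
    show "cmod (f z) \<le> (1 + 1 / measure lebesgue (cball (0::complex) \<delta>)) * (1 / c) powr (1 / p) * Ap_norm p R \<nu> f"
    proof (rule maximum_modulus_frontier[where S = "cball 0 \<rho>" and f = f and \<xi> = z])
      show "f holomorphic_on interior (cball 0 \<rho>)"
        using holomorphic_on_subset[OF hol] \<open>cball 0 \<rho> \<subseteq> disc R\<close> interior_subset by blast
      show "continuous_on (closure (cball 0 \<rho>)) f"
        using continuous_on_subset[OF holomorphic_on_imp_continuous_on[OF hol]] \<open>cball 0 \<rho> \<subseteq> disc R\<close>
        by simp
      show "z \<in> cball 0 \<rho>"
        using \<open>z \<in> K\<close> \<open>K \<subseteq> cball 0 \<rho>\<close> by blast
      show "cmod (f w) \<le> (1 + 1 / measure lebesgue (cball (0::complex) \<delta>)) * (1 / c) powr (1 / p) * Ap_norm p R \<nu> f"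
        if "w \<in> frontier (cball 0 \<rho>)" for w
        using norm_le_Ap_norm_on_circle[OF f \<open>0 < \<delta>\<close> \<open>0 < c\<close> disc lower] that by simp
    qed simp
  qed simp
qed

lemma Ap_norm_eq_0_iff:
  assumes "f \<in> Ap_space p R \<nu>"
  shows "Ap_norm p R \<nu> f = 0 \<longleftrightarrow> (\<forall>z\<in>disc R. f z = 0)"
proof
  assume "Ap_norm p R \<nu> f = 0"
  show "\<forall>z\<in>disc R. f z = 0"
  proof
    fix z
    assume "z \<in> disc R"
    then have "compact {z}" "{z} \<subseteq> disc R"
      by auto
    then obtain C where "0 \<le> C"
      and C: "\<And>w g. w \<in> {z} \<Longrightarrow> g \<in> Ap_space p R \<nu> \<Longrightarrow> cmod (g w) \<le> C * Ap_norm p R \<nu> g"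
      using norm_le_Ap_norm_on_compact by metis
    have "cmod (f z) \<le> C * Ap_norm p R \<nu> f"
      using C[OF singletonI assms] .
    then show "f z = 0"
      using \<open>Ap_norm p R \<nu> f = 0\<close> by simp
  qed
next
  assume "\<forall>z\<in>disc R. f z = 0"
  then have "(\<lambda>z. ennreal (cmod (f z) powr p * \<omega> z)) = (\<lambda>z. 0)"
    by (auto simp: \<omega>_def indicator_def)
  then have "weighted_Lp_integral lebesgue \<omega> p f = 0"
    by (simp add: weighted_Lp_integral_def)
  then show "Ap_norm p R \<nu> f = 0"
    by (simp add: Ap_norm_eq weighted_Lp_norm_def)
qed

lemma uniform_limit_of_Ap_norm_tendsto:
  assumes F: "\<And>n. F n \<in> Ap_space p R \<nu>" and f: "f \<in> Ap_space p R \<nu>"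
    and lim: "(\<lambda>n. Ap_norm p R \<nu> (\<lambda>z. F n z - f z)) \<longlonglongrightarrow> 0"
    and K: "compact K" "K \<subseteq> disc R"
  shows "uniform_limit K F f sequentially"
proof -
  obtain C where "0 \<le> C" and C: "\<And>z g. z \<in> K \<Longrightarrow> g \<in> Ap_space p R \<nu> \<Longrightarrow> cmod (g z) \<le> C * Ap_norm p R \<nu> g"
    using norm_le_Ap_norm_on_compact[OF K] by blast
  have "uniform_limit K (\<lambda>n _. C * Ap_norm p R \<nu> (\<lambda>z. F n z - f z)) (\<lambda>_. 0) sequentially"
    unfolding uniform_limit_iff
  proof (intro allI impI)
    fix e :: real
    assume "0 < e"
    have "\<forall>\<^sub>F n in sequentially. dist (C * Ap_norm p R \<nu> (\<lambda>z. F n z - f z)) 0 < e"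
      using tendsto_mult_right_zero[OF lim, of C] \<open>0 < e\<close> by (rule tendstoD)
    then show "\<forall>\<^sub>F n in sequentially. \<forall>z\<in>K. dist (C * Ap_norm p R \<nu> (\<lambda>z. F n z - f z)) 0 < e"
      by (rule eventually_mono) simp
  qed
  then show ?thesis
  proof (rule metric_uniform_limit_imp_uniform_limit[OF _ always_eventually], intro allI ballI)
    fix n z
    assume "z \<in> K"
    then have "cmod (F n z - f z) \<le> C * Ap_norm p R \<nu> (\<lambda>z. F n z - f z)"
      by (rule C[OF _ Ap_space_diff[OF F f]])
    then show "dist (F n z) (f z) \<le> dist (C * Ap_norm p R \<nu> (\<lambda>z. F n z - f z)) 0"
      by (simp add: dist_norm)
  qed
qed

lemma uniformly_Cauchy_on_of_Ap_Cauchy: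
  assumes F: "\<And>n. F n \<in> Ap_space p R \<nu>"
    and Cauchy: "\<forall>e>0. \<exists>M. \<forall>m\<ge>M. \<forall>n\<ge>M. Ap_norm p R \<nu> (\<lambda>z. F m z - F n z) < e"
    and K: "compact K" "K \<subseteq> disc R"
  shows "uniformly_Cauchy_on K F"
proof (rule uniformly_Cauchy_onI)
  fix e :: real
  assume "0 < e"
  obtain C where "0 \<le> C" and C: "\<And>z g. z \<in> K \<Longrightarrow> g \<in> Ap_space p R \<nu> \<Longrightarrow> cmod (g z) \<le> C * Ap_norm p R \<nu> g"
    using norm_le_Ap_norm_on_compact[OF K] by metis
  obtain M where M: "\<And>m n. m \<ge> M \<Longrightarrow> n \<ge> M \<Longrightarrow> Ap_norm p R \<nu> (\<lambda>z. F m z - F n z) < e / (C + 1)"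
    using Cauchy \<open>0 < e\<close> \<open>0 \<le> C\<close> by (metis add_nonneg_pos divide_pos_pos zero_less_one)
  have "dist (F m z) (F n z) < e" if "z \<in> K" "m \<ge> M" "n \<ge> M" for z m n
  proof -
    have "dist (F m z) (F n z) \<le> C * Ap_norm p R \<nu> (\<lambda>z. F m z - F n z)"
      using C[OF \<open>z \<in> K\<close> Ap_space_diff[OF F F]] by (simp add: dist_norm)
    also have "\<dots> \<le> C * (e / (C + 1))"
      using M[OF that(2,3)] \<open>0 \<le> C\<close> by (intro mult_left_mono) auto
    also have "\<dots> < e"
      using \<open>0 < e\<close> \<open>0 \<le> C\<close> by (simp add: field_simps)
    finally show ?thesis .
  qed
  then show "\<exists>M. \<forall>z\<in>K. \<forall>m\<ge>M. \<forall>n\<ge>M. dist (F m z) (F n z) < e"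
    by blast
qed

lemma weighted_Lp_integral_le_of_Ap_norm_le:
  assumes f: "\<And>m. f m \<in> Ap_space p R \<nu>" and lim: "\<And>z. z \<in> disc R \<Longrightarrow> (\<lambda>m. f m z) \<longlonglongrightarrow> h z"
    and le: "eventually (\<lambda>m. Ap_norm p R \<nu> (f m) \<le> B) sequentially"
  shows "weighted_Lp_integral lebesgue \<omega> p h \<le> ennreal (B powr p)"
proof (rule weighted_Lp_integral_le_of_tendsto[where f = f])
  show "0 < p"
    using p by simp
  show "(\<lambda>z. ennreal (cmod (f m z) powr p * \<omega> z)) \<in> borel_measurable lebesgue" for m
    by (rule Ap_space_integrand_measurable[OF f])
  show "(\<lambda>m. f m z) \<longlonglongrightarrow> h z" if "\<omega> z \<noteq> 0" for z
    using that by (cases "z \<in> disc R") (auto simp: \<omega>_def intro: lim)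
  show "eventually (\<lambda>m. weighted_Lp_integral lebesgue \<omega> p (f m) \<le> ennreal (B powr p)) sequentially"
    using le
  proof eventually_elim
    case (elim m)
    have "weighted_Lp_integral lebesgue \<omega> p (f m) = ennreal (Ap_norm p R \<nu> (f m) powr p)"
      using f[of m] p by (simp add: mem_Ap_space_iff Ap_norm_eq weighted_Lp_integral_eq_norm_powr)
    also have "\<dots> \<le> ennreal (B powr p)"
      using elim p by (intro ennreal_leI powr_mono2) (auto simp: Ap_norm_nonneg)
    finally show ?case .
  qed
qed

lemma Ap_space_complete:
  assumes F: "\<And>n. F n \<in> Ap_space p R \<nu>"
    and Cauchy: "\<forall>e>0. \<exists>M. \<forall>m\<ge>M. \<forall>n\<ge>M. Ap_norm p R \<nu> (\<lambda>z. F m z - F n z) < e"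
  shows "\<exists>g\<in>Ap_space p R \<nu>. (\<lambda>n. Ap_norm p R \<nu> (\<lambda>z. F n z - g z)) \<longlonglongrightarrow> 0"
proof -
  define g where "g = (\<lambda>z. lim (\<lambda>n. F n z))"
  have hol_F: "F n holomorphic_on disc R" for n
    using F by (simp add: mem_Ap_space_iff)
  have Cauchy_K: "uniformly_Cauchy_on K F" if "compact K" "K \<subseteq> disc R" for K
    using uniformly_Cauchy_on_of_Ap_Cauchy[OF F Cauchy that] .
  have hol: "g holomorphic_on disc R"
    unfolding g_def by (rule holomorphic_limit_of_uniformly_Cauchy_on_compact(1)[OF open_disc hol_F Cauchy_K])
  have lim: "(\<lambda>n. F n z) \<longlonglongrightarrow> g z" if "z \<in> disc R" for z
    using holomorphic_limit_of_uniformly_Cauchy_on_compact(2)[OF open_disc hol_F Cauchy_K, of "{z}"] that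
    by (simp add: g_def)
  obtain M where M: "\<And>e m n. 0 < e \<Longrightarrow> m \<ge> M e \<Longrightarrow> n \<ge> M e \<Longrightarrow> Ap_norm p R \<nu> (\<lambda>z. F m z - F n z) < e"
    using Cauchy by metis
  have tail: "weighted_Lp_integral lebesgue \<omega> p (\<lambda>z. F n z - g z) \<le> ennreal (e powr p)"
    if "0 < e" "n \<ge> M e" for e n
  proof (rule weighted_Lp_integral_le_of_Ap_norm_le[where f = "\<lambda>m z. F n z - F m z"])
    show "(\<lambda>z. F n z - F m z) \<in> Ap_space p R \<nu>" for m
      by (rule Ap_space_diff[OF F F])
    show "(\<lambda>m. F n z - F m z) \<longlonglongrightarrow> F n z - g z" if "z \<in> disc R" for z
      using lim[OF that] by (intro tendsto_diff tendsto_const)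
    show "eventually (\<lambda>m. Ap_norm p R \<nu> (\<lambda>z. F n z - F m z) \<le> e) sequentially"
      using M[OF \<open>0 < e\<close> \<open>n \<ge> M e\<close>] by (auto simp: eventually_sequentially intro: less_imp_le)
  qed
  have "(\<lambda>z. F (M 1) z - g z) \<in> Ap_space p R \<nu>"
    using tail[of 1 "M 1"] hol hol_F by (auto simp: mem_Ap_space_iff intro: holomorphic_intros le_less_trans)
  from Ap_space_diff[OF F[of "M 1"] this] have "g \<in> Ap_space p R \<nu>"
    by simp
  moreover have "(\<lambda>n. Ap_norm p R \<nu> (\<lambda>z. F n z - g z)) \<longlonglongrightarrow> 0"
  proof (rule LIMSEQ_I)
    fix e :: real
    assume "0 < e"
    have "Ap_norm p R \<nu> (\<lambda>z. F n z - g z) \<le> e / 2" if "n \<ge> M (e / 2)" for n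
      unfolding Ap_norm_eq using tail[OF _ that] p \<open>0 < e\<close> by (intro weighted_Lp_norm_le) auto
    then show "\<exists>M. \<forall>n\<ge>M. norm (Ap_norm p R \<nu> (\<lambda>z. F n z - g z) - 0) < e"
      using \<open>0 < e\<close> Ap_norm_nonneg by (intro exI[of _ "M (e / 2)"]) force
  qed
  ultimately show ?thesis
    by blast
qed

end

theorem proposition5p1:
  fixes p :: real and R :: ereal and \<nu> :: "real \<Rightarrow> real"
  assumes p: "1 < p" "p < \<infinity>"
    and R: "0 < R"
    and w: "radial_weight R \<nu>"
    and R': "\<exists>R'. 0 \<le> R' \<and> ereal R' < R \<and>
              (\<forall>y. R' < y \<and> ereal y < R \<longrightarrow> Inf {\<nu> x | x. R' \<le> x \<and> x < y} > 0)"
  defines "A \<equiv> Ap_space p R \<nu>" and "N \<equiv> Ap_norm p R \<nu>"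
  shows
    \<comment> \<open>Banach space: a complex vector space of functions on the disc ...\<close>
    "(\<lambda>z. 0) \<in> A \<and>
     (\<forall>f\<in>A. \<forall>g\<in>A. (\<lambda>z. f z + g z) \<in> A) \<and>
     (\<forall>f\<in>A. \<forall>c::complex. (\<lambda>z. c * f z) \<in> A)
     \<comment> \<open>... on which N is a norm (functions identified on the disc) ...\<close>
   \<and> (\<forall>f\<in>A. 0 \<le> N f \<and> (N f = 0 \<longleftrightarrow> (\<forall>z\<in>disc R. f z = 0)))
   \<and> (\<forall>f\<in>A. \<forall>g\<in>A. N (\<lambda>z. f z + g z) \<le> N f + N g)
   \<and> (\<forall>f\<in>A. \<forall>c::complex. N (\<lambda>z. c * f z) = cmod c * N f)
     \<comment> \<open>... which is complete\<close>
   \<and> (\<forall>F. (\<forall>n. F n \<in> A) \<and> (\<forall>e>0. \<exists>M. \<forall>m\<ge>M. \<forall>n\<ge>M. N (\<lambda>z. F m z - F n z) < e)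
          \<longrightarrow> (\<exists>g\<in>A. (\<lambda>n. N (\<lambda>z. F n z - g z)) \<longlonglongrightarrow> 0))
     \<comment> \<open>norm convergence implies uniform convergence on compact subsets\<close>
   \<and> (\<forall>F f. (\<forall>n. F n \<in> A) \<and> f \<in> A \<and> (\<lambda>n. N (\<lambda>z. F n z - f z)) \<longlonglongrightarrow> 0
          \<longrightarrow> (\<forall>K. compact K \<and> K \<subseteq> disc R \<longrightarrow> uniform_limit K F f sequentially))
     \<comment> \<open>point evaluations bounded uniformly on compact subsets\<close>
   \<and> (\<forall>K. compact K \<and> K \<subseteq> disc R \<longrightarrow>
          (\<exists>C. \<forall>z\<in>K. \<forall>f\<in>A. cmod (f z) \<le> C * N f))"
proof -
  interpret radial_weight_space_bounded_below p R \<nu>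
    using p(1) w R' by unfold_locales
  have eval_bound: "\<exists>C. \<forall>z\<in>K. \<forall>f\<in>Ap_space p R \<nu>. cmod (f z) \<le> C * Ap_norm p R \<nu> f"
    if "compact K" "K \<subseteq> disc R" for K
    using norm_le_Ap_norm_on_compact[OF that] by metis
  show ?thesis
    unfolding A_def N_def
    using Ap_space_complete uniform_limit_of_Ap_norm_tendsto eval_bound
    by (auto simp: Ap_space_zero Ap_space_add Ap_space_cmult Ap_norm_nonneg Ap_norm_eq_0_iff
        Ap_norm_triangle Ap_norm_cmult)
qed

end
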